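(* Let $\mathcal{R}$ be a tolerance relation on $X=\{1,\dots,n\}$ with chordal graph $G(\mathcal{R})$ and set of maximal cliques $\mathcal{C}$, and let $\Phi:E(\mathcal{R})^d\to\bigoplus_{C\in\mathcal{C}}M_{|C|}(\mathbb{C})$, $(x_{ij})\mapsto((x_{ij})_{i,j\in C})_{C\in\mathcal{C}}$. Then the $C^*$-algebra generated by $\Phi(E(\mathcal{R})^d)$ is all of $\bigoplus_{C\in\mathcal{C}}M_{|C|}(\mathbb{C})$.
   Context: A tolerance relation on $X=\{1,\dots,n\}$ is a reflexive symmetric relation $\mathcal{R}\subseteq X\times X$; its graph $G(\mathcal{R})$ has vertex set $X$ and an edge between distinct $i,j$ iff $(i,j)\in\mathcal{R}$. A graph is chordal if every cycle of length at least 4 has a chord. $E(\mathcal{R})=\{(x_{ij})\in M_n(\mathbb{C})\mid x_{ij}=0\text{ if }(i,j)\notin\mathcal{R}\}$, and the dual operator system $E(\mathcal{R})^d$ is identified as a vector space with $E(\mathcal{R})$. Matrices in the $C$-component of the direct sum are indexed by $C$. *)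

theory Defs
  imports Complex_Main
begin

definition tolerance_relation :: "nat \<Rightarrow> (nat \<times> nat) set \<Rightarrow> bool" where
  "tolerance_relation n R \<longleftrightarrow>
     R \<subseteq> {1..n} \<times> {1..n} \<and> (\<forall>i\<in>{1..n}. (i, i) \<in> R) \<and> (\<forall>i j. (i, j) \<in> R \<longrightarrow> (j, i) \<in> R)"

definition adj :: "(nat \<times> nat) set \<Rightarrow> nat \<Rightarrow> nat \<Rightarrow> bool" where
  "adj R i j \<longleftrightarrow> i \<noteq> j \<and> (i, j) \<in> R"

definition is_cycle :: "nat \<Rightarrow> (nat \<times> nat) set \<Rightarrow> nat list \<Rightarrow> bool" where
  "is_cycle n R vs \<longleftrightarrow> length vs \<ge> 3 \<and> distinct vs \<and> set vs \<subseteq> {1..n} \<and>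
     (\<forall>i < length vs. adj R (vs ! i) (vs ! ((i + 1) mod length vs)))"

definition has_chord :: "(nat \<times> nat) set \<Rightarrow> nat list \<Rightarrow> bool" where
  "has_chord R vs \<longleftrightarrow> (\<exists>i < length vs. \<exists>j < length vs.
     j \<noteq> (i + 1) mod length vs \<and> i \<noteq> (j + 1) mod length vs \<and> i \<noteq> j \<and>
     adj R (vs ! i) (vs ! j))"

definition chordal :: "nat \<Rightarrow> (nat \<times> nat) set \<Rightarrow> bool" where
  "chordal n R \<longleftrightarrow> (\<forall>vs. is_cycle n R vs \<and> length vs \<ge> 4 \<longrightarrow> has_chord R vs)"

definition clique :: "nat \<Rightarrow> (nat \<times> nat) set \<Rightarrow> nat set \<Rightarrow> bool" where
  "clique n R C \<longleftrightarrow> C \<subseteq> {1..n} \<and> (\<forall>i\<in>C. \<forall>j\<in>C. i \<noteq> j \<longrightarrow> adj R i j)"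

definition maximal_cliques :: "nat \<Rightarrow> (nat \<times> nat) set \<Rightarrow> nat set set" where
  "maximal_cliques n R = {C. clique n R C \<and> (\<forall>D. clique n R D \<and> C \<subseteq> D \<longrightarrow> D = C)}"

text \<open>Matrices indexed by X are functions nat => nat => complex vanishing off X x X.
  E(R): those vanishing off R (R is contained in X x X).\<close>
definition E_rel :: "(nat \<times> nat) set \<Rightarrow> (nat \<Rightarrow> nat \<Rightarrow> complex) set" where
  "E_rel R = {x. \<forall>i j. (i, j) \<notin> R \<longrightarrow> x i j = 0}"

text \<open>Elements of the direct sum over C in Cs of M_|C|(C): families f with f C a
  matrix indexed by C x C (f C i j = 0 unless C in Cs and i, j in C).\<close>
type_synonym dsum = "nat set \<Rightarrow> nat \<Rightarrow> nat \<Rightarrow> complex"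

definition dsum_space :: "nat set set \<Rightarrow> dsum set" where
  "dsum_space Cs = {f. \<forall>C i j. \<not> (C \<in> Cs \<and> i \<in> C \<and> j \<in> C) \<longrightarrow> f C i j = 0}"

definition ds_add :: "dsum \<Rightarrow> dsum \<Rightarrow> dsum" where
  "ds_add f g = (\<lambda>C i j. f C i j + g C i j)"

definition ds_smult :: "complex \<Rightarrow> dsum \<Rightarrow> dsum" where
  "ds_smult c f = (\<lambda>C i j. c * f C i j)"

definition ds_mult :: "dsum \<Rightarrow> dsum \<Rightarrow> dsum" where
  "ds_mult f g = (\<lambda>C i j. \<Sum>k\<in>C. f C i k * g C k j)"

definition ds_adj :: "dsum \<Rightarrow> dsum" where
  "ds_adj f = (\<lambda>C i j. cnj (f C j i))"

text \<open>In the finite-dimensional setting this is norm closed, hence it is the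
  C*-algebra generated by S.\<close>
definition star_closed :: "dsum set \<Rightarrow> bool" where
  "star_closed A \<longleftrightarrow> (\<forall>f\<in>A. \<forall>g\<in>A. ds_add f g \<in> A) \<and> (\<forall>c. \<forall>f\<in>A. ds_smult c f \<in> A) \<and>
     (\<forall>f\<in>A. \<forall>g\<in>A. ds_mult f g \<in> A) \<and> (\<forall>f\<in>A. ds_adj f \<in> A)"

definition cstar_generated :: "dsum set \<Rightarrow> dsum set" where
  "cstar_generated S = \<Inter>{A. S \<subseteq> A \<and> star_closed A}"

definition Phi :: "nat set set \<Rightarrow> (nat \<Rightarrow> nat \<Rightarrow> complex) \<Rightarrow> dsum" where
  "Phi Cs x = (\<lambda>C i j. if C \<in> Cs \<and> i \<in> C \<and> j \<in> C then x i j else 0)"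

end

theory Submission
  imports Defs
begin

text \<open>For i, j in a maximal clique C, the matrix unit e_ij of E(R) is mapped to the family
  having e_ij in every block D \<supseteq> {i, j}. Multiplying such families along a path
  i, k_1, ..., k_m, j through all of C keeps e_ij exactly in the blocks containing C; by
  maximality that is the block C alone. So every matrix unit of the direct sum is generated,
  and these span it.\<close>

definition ds_unit :: "nat set \<Rightarrow> nat \<Rightarrow> nat \<Rightarrow> dsum" where
  "ds_unit C i j = (\<lambda>D a b. if D = C \<and> a = i \<and> b = j then 1 else 0)"

definition ds_units_over :: "nat set set \<Rightarrow> nat set \<Rightarrow> nat \<Rightarrow> nat \<Rightarrow> dsum" where
  "ds_units_over Cs S i j = (\<lambda>D a b. if D \<in> Cs \<and> S \<subseteq> D \<and> a = i \<and> b = j then 1 else 0)"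

lemma star_closed_dsum_space: "star_closed (dsum_space Cs)"
  unfolding star_closed_def dsum_space_def ds_add_def ds_smult_def ds_mult_def ds_adj_def
  by auto

lemma cstar_generated_eqI:
  assumes "S \<subseteq> B" and "star_closed B"
    and "\<And>A. S \<subseteq> A \<Longrightarrow> star_closed A \<Longrightarrow> B \<subseteq> A"
  shows "cstar_generated S = B"
  using assms unfolding cstar_generated_def by blast

lemma ds_mult_ds_units_over:
  assumes fin: "\<forall>D\<in>Cs. finite D" and k: "k \<in> S" "k \<in> T"
  shows "ds_mult (ds_units_over Cs S i k) (ds_units_over Cs T k j) = ds_units_over Cs (S \<union> T) i j"
proof (intro ext)
  fix D a b
  show "ds_mult (ds_units_over Cs S i k) (ds_units_over Cs T k j) D a b
      = ds_units_over Cs (S \<union> T) i j D a b"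
  proof (cases "D \<in> Cs \<and> S \<subseteq> D \<and> T \<subseteq> D \<and> a = i \<and> b = j")
    case True
    then have "finite D" "k \<in> D" using fin k by auto
    have "ds_mult (ds_units_over Cs S i k) (ds_units_over Cs T k j) D a b
        = (\<Sum>l\<in>D. if l = k then 1 else 0)"
      unfolding ds_mult_def ds_units_over_def using True by (intro sum.cong) auto
    also have "\<dots> = 1" using \<open>finite D\<close> \<open>k \<in> D\<close> by simp
    finally show ?thesis using True unfolding ds_units_over_def by simp
  next
    case False
    have "ds_mult (ds_units_over Cs S i k) (ds_units_over Cs T k j) D a b = (\<Sum>l\<in>D. 0)"
      unfolding ds_mult_def ds_units_over_def using False by (intro sum.cong) auto
    then show ?thesis using False unfolding ds_units_over_def by auto
  qed
qed

lemma ds_units_over_clique_in_star_closed: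
  assumes A: "star_closed A" and fin: "\<forall>D\<in>Cs. finite D" and "finite C"
    and pairs: "\<And>i j. i \<in> C \<Longrightarrow> j \<in> C \<Longrightarrow> ds_units_over Cs {i, j} i j \<in> A"
    and ij: "i \<in> C" "j \<in> C"
  shows "ds_units_over Cs C i j \<in> A"
proof -
  have mul: "\<And>f g. f \<in> A \<Longrightarrow> g \<in> A \<Longrightarrow> ds_mult f g \<in> A"
    using A unfolding star_closed_def by auto
  have "\<forall>i\<in>C. \<forall>j\<in>C. ds_units_over Cs (insert i (insert j S)) i j \<in> A"
    if "finite S" "S \<subseteq> C" for S
    using that
  proof (induction S rule: finite_induct)
    case empty
    then show ?case using pairs by simp
  next
    case (insert k S)
    show ?case
    proof (intro ballI)
      fix i j assume "i \<in> C" "j \<in> C"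
      have "k \<in> C" using insert.prems by simp
      have "ds_units_over Cs (insert k (insert j S)) k j \<in> A"
        using insert.IH insert.prems \<open>k \<in> C\<close> \<open>j \<in> C\<close> by blast
      then have "ds_mult (ds_units_over Cs {i, k} i k) (ds_units_over Cs (insert k (insert j S)) k j) \<in> A"
        by (rule mul[OF pairs[OF \<open>i \<in> C\<close> \<open>k \<in> C\<close>]])
      moreover have "{i, k} \<union> insert k (insert j S) = insert i (insert j (insert k S))" by auto
      ultimately show "ds_units_over Cs (insert i (insert j (insert k S))) i j \<in> A"
        by (simp add: ds_mult_ds_units_over[OF fin])
    qed
  qed
  moreover have "insert i (insert j C) = C" using ij by blast
  ultimately show ?thesis using \<open>finite C\<close> ij by (metis order_refl)
qed

lemma ds_units_over_maximal:
  assumes "C \<in> Cs" and "\<And>D. D \<in> Cs \<Longrightarrow> C \<subseteq> D \<Longrightarrow> D = C" and "i \<in> C" "j \<in> C"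
  shows "ds_units_over Cs C i j = ds_unit C i j"
  using assms unfolding ds_units_over_def ds_unit_def by (intro ext) auto

lemma dsum_space_subset_star_closed:
  assumes A: "star_closed A" and zero: "(\<lambda>D a b. 0) \<in> A"
    and "finite Cs" and fin: "\<forall>C\<in>Cs. finite C"
    and units: "\<And>C i j. C \<in> Cs \<Longrightarrow> i \<in> C \<Longrightarrow> j \<in> C \<Longrightarrow> ds_unit C i j \<in> A"
  shows "dsum_space Cs \<subseteq> A"
proof
  fix f assume f: "f \<in> dsum_space Cs"
  have add: "\<And>f g. f \<in> A \<Longrightarrow> g \<in> A \<Longrightarrow> ds_add f g \<in> A"
    and smult: "\<And>c f. f \<in> A \<Longrightarrow> ds_smult c f \<in> A"
    using A unfolding star_closed_def by auto
  define Tr where "Tr = (SIGMA C:Cs. C \<times> C)"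
  have "finite Tr" unfolding Tr_def using \<open>finite Cs\<close> fin by auto
  define restrict where "restrict T = (\<lambda>D a b. if (D, a, b) \<in> T then f D a b else 0)" for T
  have partial_sums: "restrict T \<in> A"
    if "finite T" "T \<subseteq> Tr" for T
    using that
  proof (induction T rule: finite_induct)
    case empty
    then show ?case using zero unfolding restrict_def by simp
  next
    case (insert t T)
    obtain C i j where t: "t = (C, i, j)" by (cases t)
    have "ds_unit C i j \<in> A" using insert.prems t units unfolding Tr_def by blast
    moreover have "restrict T \<in> A" using insert by blast
    ultimately have "ds_add (restrict T) (ds_smult (f C i j) (ds_unit C i j)) \<in> A"
      by (intro add smult)
    moreover have "ds_add (restrict T) (ds_smult (f C i j) (ds_unit C i j)) = restrict (insert t T)"
      unfolding ds_add_def ds_smult_def ds_unit_def restrict_def t using insert.hyps(2) t by (intro ext) auto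
    ultimately show ?case by simp
  qed
  have "restrict Tr = f"
    using f unfolding dsum_space_def Tr_def restrict_def by (intro ext) auto
  then show "f \<in> A" using partial_sums[OF \<open>finite Tr\<close> order_refl] by simp
qed

lemma maximal_clique_subset:
  "C \<in> maximal_cliques n R \<Longrightarrow> C \<subseteq> {1..n}"
  unfolding maximal_cliques_def clique_def by blast

lemma maximal_cliques_antichain:
  "C \<in> maximal_cliques n R \<Longrightarrow> D \<in> maximal_cliques n R \<Longrightarrow> C \<subseteq> D \<Longrightarrow> D = C"
  unfolding maximal_cliques_def by blast

lemma finite_maximal_cliques: "finite (maximal_cliques n R)"
proof (rule finite_subset)
  show "maximal_cliques n R \<subseteq> Pow {1..n}" using maximal_clique_subset by blast
qed simp

lemma finite_maximal_clique: "\<forall>C\<in>maximal_cliques n R. finite C"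
  using maximal_clique_subset by (meson finite_atLeastAtMost rev_finite_subset)

lemma maximal_clique_pair_in_rel:
  assumes "tolerance_relation n R" and "C \<in> maximal_cliques n R" and "i \<in> C" "j \<in> C"
  shows "(i, j) \<in> R"
proof (cases "i = j")
  case True
  then show ?thesis
    using maximal_clique_subset[OF assms(2)] assms(1,3) unfolding tolerance_relation_def by blast
next
  case False
  then show ?thesis
    using assms(2-4) unfolding maximal_cliques_def clique_def adj_def by blast
qed

lemma Phi_matrix_unit:
  "Phi Cs (\<lambda>a b. if a = i \<and> b = j then 1 else 0) = ds_units_over Cs {i, j} i j"
  unfolding Phi_def ds_units_over_def by (intro ext) auto

lemma Phi_zero: "Phi Cs (\<lambda>a b. 0) = (\<lambda>D a b. 0)"
  unfolding Phi_def by simp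

theorem mainTheorem5:
  fixes n :: nat and R :: "(nat \<times> nat) set"
  assumes "tolerance_relation n R"
    and "chordal n R"
  shows "cstar_generated (Phi (maximal_cliques n R) ` E_rel R) = dsum_space (maximal_cliques n R)"
proof (rule cstar_generated_eqI)
  let ?Cs = "maximal_cliques n R"
  note fin = finite_maximal_clique[of n R]
  show "Phi ?Cs ` E_rel R \<subseteq> dsum_space ?Cs"
    unfolding Phi_def dsum_space_def by auto
  show "star_closed (dsum_space ?Cs)" by (rule star_closed_dsum_space)
  fix A assume gen: "Phi ?Cs ` E_rel R \<subseteq> A" and A: "star_closed A"
  have pairs: "ds_units_over ?Cs {i, j} i j \<in> A" if "C \<in> ?Cs" "i \<in> C" "j \<in> C" for C i j
  proof -
    have "(\<lambda>a b. if a = i \<and> b = j then 1 else 0) \<in> E_rel R"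
      using maximal_clique_pair_in_rel[OF assms(1) that] unfolding E_rel_def by auto
    then have "Phi ?Cs (\<lambda>a b. if a = i \<and> b = j then 1 else 0) \<in> A" using gen by blast
    then show ?thesis by (simp only: Phi_matrix_unit)
  qed
  have units: "ds_unit C i j \<in> A" if "C \<in> ?Cs" "i \<in> C" "j \<in> C" for C i j
  proof -
    have "ds_units_over ?Cs C i j \<in> A"
      by (rule ds_units_over_clique_in_star_closed[OF A fin bspec[OF fin that(1)]
            pairs[OF that(1)] that(2,3)])
    then show ?thesis
      using ds_units_over_maximal[OF that(1) maximal_cliques_antichain[OF that(1)] that(2,3)] by simp
  qed
  have "(\<lambda>a b. 0) \<in> E_rel R" unfolding E_rel_def by simp
  then have "Phi ?Cs (\<lambda>a b. 0) \<in> A" using gen by blast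
  then have "(\<lambda>D a b. 0) \<in> A" by (simp only: Phi_zero)
  then show "dsum_space ?Cs \<subseteq> A"
    using dsum_space_subset_star_closed[OF A _ finite_maximal_cliques fin units] by blast
qed

end
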